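(* Let $FTS=\langle S_0,S,Act,\to,L,\mathcal{F}\rangle$ be a fair transition system with $\mathcal{F}=\{F_1,\dots,F_m\}$, and let $\sigma$ be an execution of $FTS$. If there are states $s,s'$ and an index $i$ such that $s\in Inf_s(\sigma)$, $s'\in Inf_s(\sigma)$ and $s\xrightarrow{a}s'\in F_i$, then there exist $s_1,s_1'$ with $s_1\xrightarrow{a}s_1'\in F_i$ and $s_1\xrightarrow{a}s_1'\in Inf_t(\sigma)$. In particular, an execution that visits infinitely often both endpoints of a fair transition of $F_i$ takes some transition of $F_i$ infinitely often.
   Context: A transition system $\langle S_0,S,Act,\to,L\rangle$ has a finite set of states $S$, initial states $S_0\subseteq S$, a set of action labels $Act$, a total labelled transition relation $\to\subseteq S\times Act\times S$ (written $s\xrightarrow{a}s'$), and a labelling $L$ of states by atomic propositions. An execution is an infinite sequence $s_0\xrightarrow{a_0}s_1\xrightarrow{a_1}s_2\cdots$ with $s_0\in S_0$ and each $s_k\xrightarrow{a_k}s_{k+1}\in\to$; a fragment is a finite or infinite contiguous piece of an execution; $s\xrightarrow{+}s'$ denotes a fragment of one or more transitions from $s$ to $s'$. $Inf_s(\sigma)$ is the set of states occurring infinitely often in $\sigma$ and $Inf_t(\sigma)$ the set of transitions occurring infinitely often in $\sigma$. A fair transition system is a transition system together with a set $\mathcal{F}=\{F_1,\dots,F_m\}$ of fairness constraints, $F_i\subseteq\to$, such that: (a) all transitions in one $F_i$ carry the same label; (b) whenever $s\xrightarrow{a}s'\in F_i$, every fragment $s\xrightarrow{+}s'$ (one or more transitions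 from $s$ to $s'$) has the form $s\xrightarrow{*}s_1\xrightarrow{a}s_1'\xrightarrow{*}s'$ with $s_1\xrightarrow{a}s_1'\in F_i$; (c) if $s\xrightarrow{a}s'\in F_i$ and $s\xrightarrow{a}s''\in\to$ then $s'=s''$. *)

theory Defs
  imports Main
begin

definition transition_system ::
  "'s set \<Rightarrow> 's set \<Rightarrow> 'a set \<Rightarrow> ('s \<times> 'a \<times> 's) set \<Rightarrow> ('s \<Rightarrow> 'p set) \<Rightarrow> bool" where
  "transition_system S0 S Act T L \<longleftrightarrow>
     finite S \<and> S0 \<subseteq> S \<and> T \<subseteq> S \<times> Act \<times> S \<and>
     (\<forall>s\<in>S. \<exists>a s'. (s, a, s') \<in> T)"

definition is_execution ::
  "'s set \<Rightarrow> ('s \<times> 'a \<times> 's) set \<Rightarrow> (nat \<Rightarrow> 's) \<Rightarrow> (nat \<Rightarrow> 'a) \<Rightarrow> bool" where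
  "is_execution S0 T ss as \<longleftrightarrow>
     ss 0 \<in> S0 \<and> (\<forall>k. (ss k, as k, ss (Suc k)) \<in> T)"

text \<open>Fairness constraints F 1, ..., F m, with conditions (a), (b), (c).
 A fragment s -->+ s' is a finite contiguous piece (positions j < k) of an execution.\<close>

definition fair_transition_system ::
  "'s set \<Rightarrow> 's set \<Rightarrow> 'a set \<Rightarrow> ('s \<times> 'a \<times> 's) set \<Rightarrow> ('s \<Rightarrow> 'p set)
    \<Rightarrow> (nat \<Rightarrow> ('s \<times> 'a \<times> 's) set) \<Rightarrow> nat \<Rightarrow> bool" where
  "fair_transition_system S0 S Act T L F m \<longleftrightarrow>
     transition_system S0 S Act T L \<and>
     (\<forall>i\<in>{1..m}.
        F i \<subseteq> T \<and>
        (\<exists>a. \<forall>s b s'. (s, b, s') \<in> F i \<longrightarrow> b = a) \<and>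
        (\<forall>s a s'. (s, a, s') \<in> F i \<longrightarrow>
           (\<forall>ss as j k. is_execution S0 T ss as \<and> j < k \<and> ss j = s \<and> ss k = s' \<longrightarrow>
              (\<exists>l. j \<le> l \<and> l < k \<and> as l = a \<and> (ss l, as l, ss (Suc l)) \<in> F i))) \<and>
        (\<forall>s a s' s''. (s, a, s') \<in> F i \<and> (s, a, s'') \<in> T \<longrightarrow> s' = s''))"

definition Inf_s :: "(nat \<Rightarrow> 's) \<Rightarrow> 's set" where
  "Inf_s ss = {s. infinite {k. ss k = s}}"

definition Inf_t :: "(nat \<Rightarrow> 's) \<Rightarrow> (nat \<Rightarrow> 'a) \<Rightarrow> ('s \<times> 'a \<times> 's) set" where
  "Inf_t ss as = {t. infinite {k. (ss k, as k, ss (Suc k)) = t}}"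

end

theory Submission
  imports Defs "HOL-Library.Infinite_Set"
begin

text \<open>Since s and s' both recur, every visit to s is followed by a later visit to s', and
  condition (b) puts an a-labelled transition of F i between the two. So F i is taken
  with label a infinitely often; as there are only finitely many a-labelled transitions
  over the finite state set, one of them is taken infinitely often.\<close>

lemma Inf_s_iff_INFM: "s \<in> Inf_s ss \<longleftrightarrow> (\<exists>\<^sub>\<infinity>k. ss k = s)"
  by (simp add: Inf_s_def INFM_iff_infinite)

lemma Inf_t_iff_INFM: "t \<in> Inf_t ss as \<longleftrightarrow> (\<exists>\<^sub>\<infinity>k. (ss k, as k, ss (Suc k)) = t)"
  by (simp add: Inf_t_def INFM_iff_infinite)

lemma finite_transitions_with_label:
  assumes "transition_system S0 S Act T L"
  shows "finite {(s, b, s') \<in> T. b = a}"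
proof (rule finite_subset)
  show "{(s, b, s') \<in> T. b = a} \<subseteq> S \<times> {a} \<times> S"
    using assms unfolding transition_system_def by auto
  show "finite (S \<times> {a} \<times> S)"
    using assms unfolding transition_system_def by simp
qed

lemma fair_constraint_taken_between:
  assumes "fair_transition_system S0 S Act T L F m" and "i \<in> {1..m}"
    and "(s, a, s') \<in> F i" and "is_execution S0 T ss as"
    and "j < k" and "ss j = s" and "ss k = s'"
  obtains l where "j \<le> l" "l < k" "as l = a" "(ss l, as l, ss (Suc l)) \<in> F i"
  using assms unfolding fair_transition_system_def by blast

lemma fair_constraint_taken_infinitely_often:
  assumes "fair_transition_system S0 S Act T L F m" and "i \<in> {1..m}"
    and "(s, a, s') \<in> F i" and "is_execution S0 T ss as"
    and "s \<in> Inf_s ss" and "s' \<in> Inf_s ss"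
  shows "\<exists>\<^sub>\<infinity>l. as l = a \<and> (ss l, as l, ss (Suc l)) \<in> F i"
  unfolding INFM_nat_le
proof
  fix n
  obtain j where j: "j \<ge> n" "ss j = s"
    using \<open>s \<in> Inf_s ss\<close> by (auto simp: Inf_s_iff_INFM INFM_nat_le)
  obtain k where k: "k > j" "ss k = s'"
    using \<open>s' \<in> Inf_s ss\<close> by (auto simp: Inf_s_iff_INFM INFM_nat)
  obtain l where l: "j \<le> l" "as l = a" "(ss l, as l, ss (Suc l)) \<in> F i"
    by (rule fair_constraint_taken_between[OF assms(1-4) k(1) j(2) k(2)])
  from j(1) l(1) have "n \<le> l" by (rule order.trans)
  with l(2,3) show "\<exists>l\<ge>n. as l = a \<and> (ss l, as l, ss (Suc l)) \<in> F i"
    by blast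
qed

theorem mainTheorem1:
  fixes S0 S :: "'s set" and Act :: "'a set" and T :: "('s \<times> 'a \<times> 's) set"
    and L :: "'s \<Rightarrow> 'p set" and F :: "nat \<Rightarrow> ('s \<times> 'a \<times> 's) set" and m :: nat
    and ss :: "nat \<Rightarrow> 's" and as :: "nat \<Rightarrow> 'a"
  assumes "fair_transition_system S0 S Act T L F m"
    and "is_execution S0 T ss as"
    and "i \<in> {1..m}"
    and "s \<in> Inf_s ss" and "s' \<in> Inf_s ss"
    and "(s, a, s') \<in> F i"
  shows "\<exists>s1 s1'. (s1, a, s1') \<in> F i \<and> (s1, a, s1') \<in> Inf_t ss as"
proof -
  have ts: "transition_system S0 S Act T L" and "F i \<subseteq> T"
    using assms(1,3) by (simp_all add: fair_transition_system_def)
  define A where "A = {(s1, b, s1') \<in> F i. b = a}"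
  have "finite A"
  proof (rule finite_subset)
    show "A \<subseteq> {(s1, b, s1') \<in> T. b = a}"
      using \<open>F i \<subseteq> T\<close> unfolding A_def by auto
    show "finite {(s1, b, s1') \<in> T. b = a}"
      using finite_transitions_with_label[OF ts] .
  qed
  have "\<exists>\<^sub>\<infinity>l. as l = a \<and> (ss l, as l, ss (Suc l)) \<in> F i"
    using fair_constraint_taken_infinitely_often[OF assms(1,3,6,2,4,5)] .
  then have "\<exists>\<^sub>\<infinity>l. \<exists>t\<in>A. (ss l, as l, ss (Suc l)) = t"
    by (rule INFM_mono) (auto simp: A_def)
  then obtain t where "t \<in> A" and "\<exists>\<^sub>\<infinity>l. (ss l, as l, ss (Suc l)) = t"
    unfolding INFM_finite_Bex_distrib[OF \<open>finite A\<close>] by blast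
  moreover obtain s1 s1' where "t = (s1, a, s1')" "(s1, a, s1') \<in> F i"
    using \<open>t \<in> A\<close> unfolding A_def by blast
  ultimately show ?thesis
    unfolding Inf_t_iff_INFM by blast
qed

end
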